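(* Fix constants $\alpha>0$, $\beta>0$, $\theta>0$ and $\gamma_P>2$. Let $f(n):=n^{2/3}\ln^{1/3}n$, $s:=\min\{\lceil\alpha f(n)\rceil,n-1\}$ and $g:=(\beta s\ln(\theta s))^{1/2}$. Suppose $s<n-1$ and $1<\theta s\le n$. Let $c_{nk}$ be the number of comparisons made by the nonrecursive SELECT on an input list of size $n$ with rank $k$, and set $$\hat\gamma_P:=(4\gamma_P+2)(\beta/\alpha)^{1/2}+(2\gamma_P-1)\big[\alpha+1/f(n)\big].$$ Then $$\mathrm{P}\big[c_{nk}\le n+\min\{k,n-k\}+\hat\gamma_P f(n)\big]\ge1-4(\alpha\theta)^{-2\beta}n^{-4\beta/3}\ln^{-2\beta/3}n.$$ Moreover, if $\beta\ge1/4$, then $$\mathrm{E}\,c_{nk}\le n+\min\{k,n-k\}+\big(\hat\gamma_P+(4\gamma_P+2)(\alpha\theta)^{-2\beta}\big)f(n).$$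
   Context: Nonrecursive SELECT. The input is a list $X=(x_1,\dots,x_n)$ of elements of a totally ordered set (repeated values allowed) and an integer $1\le k\le n$. Let $\mathcal R$ be a deterministic routine that finds the $i$th smallest of any $m$ elements using at most $\gamma_P m$ comparisons. 1. Choose a set $I$ of $s$ positions uniformly at random among all $s$-subsets of $\{1,\dots,n\}$. The sample is $S=(x_j)_{j\in I}$ with sorted elements $y_1^*\le\dots\le y_s^*$. 2. Set $i_u:=\max\{\lceil ks/n-g\rceil,1\}$ and $i_v:=\min\{\lceil ks/n+g\rceil,s\}$. Compute $u:=y_{i_u}^*$ and $v:=y_{i_v}^*$ using $\mathcal R$ at most twice on at most $s$ elements, so this step uses at most $2\gamma_P s$ comparisons. 3. Partition. Each $x_j$ with $j\notin I$ is compared with the pivots. - If $k<n/2$: $x_j$ is compared with $v$ first, and with $u$ only if $x_j<v$ and $u<v$. - If $k\ge n/2$: $x_j$ is compared with $u$ first, and with $v$ only if $x_j>u$ and $u<v$. Sample elements are not compared. Hence this step uses $c$ comparisons, where $c=n-s$ if $u=v$, $c=(n-s)+|\{j\notin I:x_j<v\}|$ if $u<v$ and $k<n/2$, and $c=(n-s)+|\{j\notin I:x_j>u\}|$ if $u<v$ and $k\ge n/2$. 4. Let $L=\{x<u\}$, $U=\{x=u\}$, $M=\{u<x<v\}$ and $R=\{x>v\}$. - If $|L|<k\le|L\cup U|$, return $u$; if $|L\cup U\cup M|<k\le n-|R|$, return $v$. In either case set $\hat n:=0$. - Otherwise let $\hat X$ be $L$ if $k\le|L|$, else $R$ if $n-|R|<k$,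 else $M$. Let $\hat n:=|\hat X|$ and find the answer in $\hat X$ with $\mathcal R$, using at most $\gamma_P\hat n$ comparisons. The total count $c_{nk}$ consists of the comparisons in steps 2, 3 and 4, so $c_{nk}\le 2\gamma_P s+c+\gamma_P\hat n$. $\mathrm{P}$ and $\mathrm{E}$ are with respect to the random sample. *)

theory Defs
  imports "HOL-Probability.Probability"
begin

text \<open>Positions are 0-based: the input list X has positions 0..<n.\<close>

definition fsel :: "nat \<Rightarrow> real" where
  "fsel n = real n powr (2/3) * ln (real n) powr (1/3)"

definition s_size :: "real \<Rightarrow> nat \<Rightarrow> nat" where
  "s_size \<alpha> n = min (nat \<lceil>\<alpha> * fsel n\<rceil>) (n - 1)"

definition g_gap :: "real \<Rightarrow> real \<Rightarrow> nat \<Rightarrow> real" where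
  "g_gap \<beta> \<theta> s = sqrt (\<beta> * real s * ln (\<theta> * real s))"

text \<open>Sorted sample y*_1 <= ... <= y*_s (as a 0-indexed list).\<close>
definition sorted_sample :: "'a::linorder list \<Rightarrow> nat set \<Rightarrow> 'a list" where
  "sorted_sample X I = sort (map (\<lambda>j. X ! j) (sorted_list_of_set I))"

definition sample_list :: "'a::linorder list \<Rightarrow> nat set \<Rightarrow> 'a list" where
  "sample_list X I = map (\<lambda>j. X ! j) (sorted_list_of_set I)"

definition i_u :: "nat \<Rightarrow> nat \<Rightarrow> nat \<Rightarrow> real \<Rightarrow> nat" where
  "i_u n k s g = nat (max \<lceil>real k * real s / real n - g\<rceil> 1)"

definition i_v :: "nat \<Rightarrow> nat \<Rightarrow> nat \<Rightarrow> real \<Rightarrow> nat" where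
  "i_v n k s g = min (nat \<lceil>real k * real s / real n + g\<rceil>) s"

definition pivot_u :: "'a::linorder list \<Rightarrow> nat set \<Rightarrow> nat \<Rightarrow> real \<Rightarrow> nat \<Rightarrow> 'a" where
  "pivot_u X I k g s = sorted_sample X I ! (i_u (length X) k s g - 1)"

definition pivot_v :: "'a::linorder list \<Rightarrow> nat set \<Rightarrow> nat \<Rightarrow> real \<Rightarrow> nat \<Rightarrow> 'a" where
  "pivot_v X I k g s = sorted_sample X I ! (i_v (length X) k s g - 1)"

text \<open>Step 2: R is applied to the sample to find y*_{i_u} and y*_{i_v}.
  R_cost xs i is the number of comparisons R uses to find the i-th smallest of xs.\<close>
definition step2_cost :: "('a::linorder list \<Rightarrow> nat \<Rightarrow> nat) \<Rightarrow> 'a list \<Rightarrow> nat set \<Rightarrow> nat \<Rightarrow> real \<Rightarrow> nat \<Rightarrow> nat" where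
  "step2_cost R_cost X I k g s =
     R_cost (sample_list X I) (i_u (length X) k s g) + R_cost (sample_list X I) (i_v (length X) k s g)"

definition step3_cost :: "'a::linorder list \<Rightarrow> nat set \<Rightarrow> nat \<Rightarrow> real \<Rightarrow> nat \<Rightarrow> nat" where
  "step3_cost X I k g s =
    (let n = length X; u = pivot_u X I k g s; v = pivot_v X I k g s in
     (n - s) + (if u < v then
                  (if 2 * k < n then card {j. j < n \<and> j \<notin> I \<and> X ! j < v}
                   else card {j. j < n \<and> j \<notin> I \<and> u < X ! j})
                else 0))"

text \<open>Step 4: the answer is u, v, or is found in L, R or M by R.\<close>
definition step4_cost :: "('a::linorder list \<Rightarrow> nat \<Rightarrow> nat) \<Rightarrow> 'a list \<Rightarrow> nat set \<Rightarrow> nat \<Rightarrow> real \<Rightarrow> nat \<Rightarrow> nat" where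
  "step4_cost R_cost X I k g s =
    (let n = length X; u = pivot_u X I k g s; v = pivot_v X I k g s;
         nL = length (filter (\<lambda>x. x < u) X);
         nLU = length (filter (\<lambda>x. x \<le> u) X);
         nLUM = length (filter (\<lambda>x. x < v \<or> x \<le> u) X);
         nR = length (filter (\<lambda>x. v < x) X) in
     if (nL < k \<and> k \<le> nLU) \<or> (nLUM < k \<and> k \<le> n - nR) then 0
     else if k \<le> nL then R_cost (filter (\<lambda>x. x < u) X) k
     else if n - nR < k then R_cost (filter (\<lambda>x. v < x) X) (k - (n - nR))
     else R_cost (filter (\<lambda>x. u < x \<and> x < v) X) (k - nLU))"

definition c_nk :: "('a::linorder list \<Rightarrow> nat \<Rightarrow> nat) \<Rightarrow> real \<Rightarrow> real \<Rightarrow> real \<Rightarrow> 'a list \<Rightarrow> nat \<Rightarrow> nat set \<Rightarrow> nat" where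
  "c_nk R_cost \<alpha> \<beta> \<theta> X k I =
    (let s = s_size \<alpha> (length X); g = g_gap \<beta> \<theta> s in
     step2_cost R_cost X I k g s + step3_cost X I k g s + step4_cost R_cost X I k g s)"

definition sample_pmf :: "nat \<Rightarrow> nat \<Rightarrow> nat set pmf" where
  "sample_pmf n s = pmf_of_set {I. I \<subseteq> {..<n} \<and> card I = s}"

definition gamma_hat :: "real \<Rightarrow> real \<Rightarrow> real \<Rightarrow> nat \<Rightarrow> real" where
  "gamma_hat \<gamma>P \<alpha> \<beta> n = (4 * \<gamma>P + 2) * sqrt (\<beta> / \<alpha>) + (2 * \<gamma>P - 1) * (\<alpha> + 1 / fsel n)"

end

theory Submission
  imports Defs
begin

text \<open>
  For a fixed set A of t input positions, the number of sample positions in A is hypergeometric;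
  its moment generating function is dominated by that of the binomial distribution, so Hoeffding's
  bound shows that it deviates from its mean t s / n by at least g with probability at most
  exp (-2 g^2 / s) = (\<theta> s) powr (-2 \<beta>).
  Taking for A the positions of the t smallest entries, for four ranks t within about
  D = g n / s of k, shows that outside an event of probability 4 exp (-2 g^2 / s) the pivots
  u and v bracket the k-th smallest entry within O(D) ranks. Then partitioning costs at most
  n - s + min k (n - k) + 2 D comparisons and the final call of R at most 4 \<gamma>P D, while in the
  exceptional event every part costs at most \<gamma>P n. With s \<approx> \<alpha> f(n) this gives
  D \<le> (\<beta> / \<alpha>) powr (1/2) f(n), and for \<beta> \<ge> 1/4 the exceptional term n exp (-2 g^2 / s)
  is O(f(n)).
\<close>

section \<open>Hypergeometric tail bounds\<close>

lemma binomial_mult_power_le: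
  assumes "t \<le> n"
  shows "real (t choose i) * real n ^ i \<le> real (n choose i) * real t ^ i"
proof (cases "i \<le> t")
  case False
  then show ?thesis by (simp add: binomial_eq_0)
next
  case True
  have "real (t - j) * real n \<le> real (n - j) * real t" if "j < i" for j
  proof -
    have "real j * real t \<le> real j * real n" using assms by (intro mult_left_mono) auto
    then show ?thesis using that True assms by (simp add: of_nat_diff algebra_simps)
  qed
  then have factor: "real (t - j) / real (i - j) * real n \<le> real (n - j) / real (i - j) * real t"
    if "j < i" for j
    using that by (simp add: divide_right_mono mult.commute mult.left_commute times_divide_eq_left)
  have "real (t choose i) * real n ^ i
      = (\<Prod>j = 0..<i. real (t - j) / real (i - j)) * (\<Prod>j = 0..<i. real n)"
    using True by (simp only: binomial_altdef_of_nat prod_constant card_atLeastLessThan diff_zero)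
  also have "\<dots> = (\<Prod>j = 0..<i. real (t - j) / real (i - j) * real n)"
    by (rule prod.distrib[symmetric])
  also have "\<dots> \<le> (\<Prod>j = 0..<i. real (n - j) / real (i - j) * real t)"
    using factor by (intro prod_mono) auto
  also have "\<dots> = (\<Prod>j = 0..<i. real (n - j) / real (i - j)) * (\<Prod>j = 0..<i. real t)"
    by (rule prod.distrib)
  also have "\<dots> = real (n choose i) * real t ^ i"
    using True assms by (simp only: binomial_altdef_of_nat prod_constant card_atLeastLessThan diff_zero order.trans)
  finally show ?thesis .
qed

definition samples :: "nat \<Rightarrow> nat \<Rightarrow> nat set set" where
  "samples n s = {I. I \<subseteq> {..<n} \<and> card I = s}"

lemma sample_pmf_eq_pmf_of_set: "sample_pmf n s = pmf_of_set (samples n s)"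
  unfolding sample_pmf_def samples_def ..

lemma finite_samples: "finite (samples n s)"
  unfolding samples_def by (rule finite_subset[of _ "Pow {..<n}"]) auto

lemma card_samples: "card (samples n s) = n choose s"
  unfolding samples_def using n_subsets[of "{..<n}" s] by simp

lemma samples_nonempty: "s \<le> n \<Longrightarrow> samples n s \<noteq> {}"
  using card_samples[of n s] by (metis binomial_eq_0_iff card.empty not_less)

lemma samplesD:
  assumes "I \<in> samples n s"
  shows "finite I" "card I = s" "I \<subseteq> {..<n}"
  using assms unfolding samples_def by (auto intro: finite_subset)

lemma card_samples_supersets:
  assumes K: "K \<subseteq> {..<n}" "card K \<le> s"
  shows "card {I \<in> samples n s. K \<subseteq> I} = (n - card K) choose (s - card K)"
proof -
  have fK: "finite K" using K(1) finite_subset by blast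
  have "bij_betw (\<lambda>J. J \<union> K) {J. J \<subseteq> {..<n} - K \<and> card J = s - card K} {I \<in> samples n s. K \<subseteq> I}"
  proof (rule bij_betwI[where g = "\<lambda>I. I - K"])
    show "(\<lambda>J. J \<union> K) \<in> {J. J \<subseteq> {..<n} - K \<and> card J = s - card K} \<rightarrow> {I \<in> samples n s. K \<subseteq> I}"
    proof
      fix J assume J: "J \<in> {J. J \<subseteq> {..<n} - K \<and> card J = s - card K}"
      then have "card (J \<union> K) = card J + card K"
        using fK by (intro card_Un_disjoint) (auto intro: finite_subset)
      then show "J \<union> K \<in> {I \<in> samples n s. K \<subseteq> I}" using J K by (auto simp: samples_def)
    qed
    show "(\<lambda>I. I - K) \<in> {I \<in> samples n s. K \<subseteq> I} \<rightarrow> {J. J \<subseteq> {..<n} - K \<and> card J = s - card K}"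
      using fK by (auto simp: samples_def card_Diff_subset)
  qed auto
  then have "card {I \<in> samples n s. K \<subseteq> I} = card {J. J \<subseteq> {..<n} - K \<and> card J = s - card K}"
    by (simp add: bij_betw_same_card)
  also have "\<dots> = card ({..<n} - K) choose (s - card K)" by (rule n_subsets) auto
  also have "card ({..<n} - K) = n - card K" using K fK by (simp add: card_Diff_subset)
  finally show ?thesis .
qed

lemma sum_samples_choose_card_Int:
  assumes A: "A \<subseteq> {..<n}" and i: "i \<le> s"
  shows "(\<Sum>I\<in>samples n s. card (I \<inter> A) choose i) = (card A choose i) * ((n - i) choose (s - i))"
proof -
  define Ks where "Ks = {K. K \<subseteq> A \<and> card K = i}"
  have fA: "finite A" using A finite_subset by blast
  then have fKs: "finite Ks" unfolding Ks_def by (auto intro: finite_subset[of _ "Pow A"])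
  have "(\<Sum>I\<in>samples n s. card (I \<inter> A) choose i) = (\<Sum>I\<in>samples n s. card {K\<in>Ks. K \<subseteq> I})"
  proof (rule sum.cong[OF refl])
    fix I
    have "card (I \<inter> A) choose i = card {K. K \<subseteq> I \<inter> A \<and> card K = i}"
      using fA by (intro n_subsets[symmetric]) simp
    also have "{K. K \<subseteq> I \<inter> A \<and> card K = i} = {K\<in>Ks. K \<subseteq> I}" unfolding Ks_def by auto
    finally show "card (I \<inter> A) choose i = card {K\<in>Ks. K \<subseteq> I}" .
  qed
  also have "\<dots> = (\<Sum>I\<in>samples n s. \<Sum>K\<in>Ks. of_bool (K \<subseteq> I))"
    using fKs by (simp add: Int_def)
  also have "\<dots> = (\<Sum>K\<in>Ks. \<Sum>I\<in>samples n s. of_bool (K \<subseteq> I))"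
    by (rule sum.swap)
  also have "\<dots> = (\<Sum>K\<in>Ks. card {I \<in> samples n s. K \<subseteq> I})"
    using finite_samples by (simp add: Int_def)
  also have "\<dots> = (\<Sum>K\<in>Ks. (n - i) choose (s - i))"
    using A i by (intro sum.cong refl) (auto simp: Ks_def card_samples_supersets)
  also have "\<dots> = (card A choose i) * ((n - i) choose (s - i))"
    using n_subsets[OF fA] by (simp add: Ks_def)
  finally show ?thesis .
qed

text \<open>Sampling without replacement is dominated by sampling with replacement:
  the moment generating function of the hypergeometric count is at most the binomial one.\<close>
lemma sum_samples_power_card_Int_le:
  assumes A: "A \<subseteq> {..<n}" and sn: "s \<le> n" and x: "1 \<le> x"
  shows "(\<Sum>I\<in>samples n s. x ^ card (I \<inter> A))
           \<le> real (card (samples n s)) * (1 + real (card A) / real n * (x - 1)) ^ s"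
proof -
  define p where "p = real (card A) / real n"
  have An: "card A \<le> n" using card_mono[OF _ A] by simp
  have binomial_expansion:
    "x ^ card (I \<inter> A) = (\<Sum>i\<le>s. real (card (I \<inter> A) choose i) * (x - 1) ^ i)"
    if "I \<in> samples n s" for I
  proof -
    have "card (I \<inter> A) \<le> s"
      using samplesD[OF that] by (metis card_mono inf_le1)
    moreover have "x ^ card (I \<inter> A) = (\<Sum>i\<le>card (I \<inter> A). real (card (I \<inter> A) choose i) * (x - 1) ^ i)"
      using binomial_ring[of "x - 1" 1 "card (I \<inter> A)"] by simp
    ultimately show ?thesis by (simp add: sum.mono_neutral_left)
  qed
  have "(\<Sum>I\<in>samples n s. x ^ card (I \<inter> A))
      = (\<Sum>i\<le>s. (x - 1) ^ i * real (\<Sum>I\<in>samples n s. card (I \<inter> A) choose i))"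
    by (simp add: binomial_expansion sum.swap[of _ "samples n s"] sum_distrib_left mult.commute)
  also have "\<dots> = (\<Sum>i\<le>s. (x - 1) ^ i * (real (card A choose i) * real ((n - i) choose (s - i))))"
    using A by (simp add: sum_samples_choose_card_Int)
  also have "\<dots> \<le> (\<Sum>i\<le>s. (x - 1) ^ i * (real (n choose s) * real (s choose i) * p ^ i))"
  proof (intro sum_mono mult_left_mono)
    fix i assume "i \<in> {..s}"
    then have choose_eq: "real (n choose s) * real (s choose i)
                            = real (n choose i) * real ((n - i) choose (s - i))"
      using choose_mult[of i s n] sn by (metis atMost_iff of_nat_mult)
    have "real (card A choose i) \<le> real (n choose i) * p ^ i"
    proof (cases "n = 0")
      case True
      then show ?thesis using An by (cases i) (auto simp: p_def)
    next
      case False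
      then show ?thesis
        using binomial_mult_power_le[OF An, of i] by (simp add: p_def power_divide field_simps)
    qed
    then have "real (card A choose i) * real ((n - i) choose (s - i))
                 \<le> real (n choose i) * p ^ i * real ((n - i) choose (s - i))"
      by (rule mult_right_mono) simp
    then show "real (card A choose i) * real ((n - i) choose (s - i))
                 \<le> real (n choose s) * real (s choose i) * p ^ i"
      unfolding choose_eq by (simp add: mult_ac)
  qed (use x in simp)
  also have "\<dots> = real (n choose s) * (\<Sum>i\<le>s. real (s choose i) * (p * (x - 1)) ^ i * 1 ^ (s - i))"
    by (simp add: sum_distrib_left power_mult_distrib mult_ac)
  also have "\<dots> = real (n choose s) * (p * (x - 1) + 1) ^ s"
    by (subst binomial_ring) simp
  finally show ?thesis by (simp add: card_samples p_def add.commute)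
qed

lemma hypergeometric_upper_tail:
  assumes A: "A \<subseteq> {..<n}" and sn: "s \<le> n" and s: "0 < s" and g: "0 \<le> g"
  shows "real (card {I \<in> samples n s. real (card A) * real s / real n + g \<le> real (card (I \<inter> A))})
           \<le> exp (- 2 * g\<^sup>2 / real s) * real (card (samples n s))"
proof -
  \<comment> \<open>the Chernoff parameter minimising the exponent s (l p + l^2 / 8) - l (p s + g)\<close>
  define l where "l = 4 * g / real s"
  define p where "p = real (card A) / real n"
  define E where "E = {I \<in> samples n s. real (card A) * real s / real n + g \<le> real (card (I \<inter> A))}"
  have l: "0 \<le> l" and p: "0 \<le> p" unfolding l_def p_def using g by auto
  have "real (card E) * exp (l * (p * real s + g)) = (\<Sum>I\<in>E. exp (l * (p * real s + g)))" by simp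
  also have "\<dots> \<le> (\<Sum>I\<in>E. exp l ^ card (I \<inter> A))"
  proof (rule sum_mono)
    fix I assume "I \<in> E"
    then have "exp (l * (p * real s + g)) \<le> exp (l * real (card (I \<inter> A)))"
      using l unfolding E_def p_def by (auto intro: mult_left_mono)
    then show "exp (l * (p * real s + g)) \<le> exp l ^ card (I \<inter> A)"
      by (simp add: exp_of_nat_mult[symmetric] mult.commute)
  qed
  also have "\<dots> \<le> (\<Sum>I\<in>samples n s. exp l ^ card (I \<inter> A))"
    using finite_samples by (intro sum_mono2) (auto simp: E_def)
  also have "\<dots> \<le> real (card (samples n s)) * (1 + p * (exp l - 1)) ^ s"
    unfolding p_def using l by (intro sum_samples_power_card_Int_le[OF A sn]) auto
  also have "\<dots> \<le> real (card (samples n s)) * exp (real s * (l * p + l\<^sup>2 / 8))"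
  proof (rule mult_left_mono)
    have "(1 + p * (exp l - 1)) ^ s = exp (real s * ln (1 + p * (exp l - 1)))"
      using l p by (simp add: exp_of_nat_mult add_pos_nonneg)
    also have "\<dots> \<le> exp (real s * (l * p + l\<^sup>2 / 8))"
      using Hoeffdings_lemma_aux[OF l p] by (auto intro: mult_left_mono)
    finally show "(1 + p * (exp l - 1)) ^ s \<le> exp (real s * (l * p + l\<^sup>2 / 8))" .
  qed simp
  finally have "real (card E) \<le> real (card (samples n s)) * exp (real s * (l * p + l\<^sup>2 / 8))
                                  / exp (l * (p * real s + g))"
    by (simp add: pos_le_divide_eq)
  also have "\<dots> = real (card (samples n s)) * exp (real s * (l * p + l\<^sup>2 / 8) - l * (p * real s + g))"
    by (simp add: exp_diff)
  also have "real s * (l * p + l\<^sup>2 / 8) - l * (p * real s + g) = - 2 * g\<^sup>2 / real s"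
    unfolding l_def using s by (simp add: field_simps power2_eq_square)
  finally show ?thesis unfolding E_def p_def by (simp add: mult.commute)
qed

lemma hypergeometric_lower_tail:
  assumes A: "A \<subseteq> {..<n}" and sn: "s \<le> n" and s: "0 < s" and g: "0 \<le> g"
  shows "real (card {I \<in> samples n s. real (card (I \<inter> A)) \<le> real (card A) * real s / real n - g})
           \<le> exp (- 2 * g\<^sup>2 / real s) * real (card (samples n s))"
proof -
  define B where "B = {..<n} - A"
  have "card A \<le> n" using card_mono[OF _ A] by simp
  then have cB: "real (card B) = real n - real (card A)"
    using A by (simp add: B_def card_Diff_subset finite_subset of_nat_diff)
  have "{I \<in> samples n s. real (card (I \<inter> A)) \<le> real (card A) * real s / real n - g}
        \<subseteq> {I \<in> samples n s. real (card B) * real s / real n + g \<le> real (card (I \<inter> B))}"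
  proof safe
    fix I assume I: "I \<in> samples n s"
      and le: "real (card (I \<inter> A)) \<le> real (card A) * real s / real n - g"
    have "I \<inter> B = I - (I \<inter> A)" using samplesD(3)[OF I] by (auto simp: B_def)
    moreover have "card (I \<inter> A) \<le> card I" using samplesD(1)[OF I] by (simp add: card_mono)
    ultimately have "real (card (I \<inter> B)) = real s - real (card (I \<inter> A))"
      using samplesD(1,2)[OF I] by (simp add: card_Diff_subset of_nat_diff)
    moreover have "real (card B) * real s / real n = real s - real (card A) * real s / real n"
      using sn s unfolding cB by (simp add: field_simps)
    ultimately show "real (card B) * real s / real n + g \<le> real (card (I \<inter> B))"
      using le by simp
  qed
  then have "card {I \<in> samples n s. real (card (I \<inter> A)) \<le> real (card A) * real s / real n - g}
        \<le> card {I \<in> samples n s. real (card B) * real s / real n + g \<le> real (card (I \<inter> B))}"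
    using finite_samples by (intro card_mono) auto
  also have "real \<dots> \<le> exp (- 2 * g\<^sup>2 / real s) * real (card (samples n s))"
    by (rule hypergeometric_upper_tail[OF _ sn s g]) (simp add: B_def)
  finally show ?thesis by simp
qed

section \<open>Uniform distributions with rare exceptional sets\<close>

lemma prob_pmf_of_set_ge_of_exceptions:
  assumes S: "finite S" "S \<noteq> {}" and good: "\<And>x. x \<in> S \<Longrightarrow> \<not> Q x \<Longrightarrow> P x"
    and Q: "real (card (S \<inter> {x. Q x})) \<le> r * real (card S)"
  shows "1 - r \<le> measure_pmf.prob (pmf_of_set S) {x. P x}"
proof -
  have "S \<subseteq> (S \<inter> {x. P x}) \<union> (S \<inter> {x. Q x})" using good by blast
  then have "card S \<le> card (S \<inter> {x. P x}) + card (S \<inter> {x. Q x})"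
    using S(1) by (meson card_Un_le card_mono finite_Int finite_UnI order_trans)
  then have "(1 - r) * real (card S) \<le> real (card (S \<inter> {x. P x}))"
    using Q by (simp add: algebra_simps)
  then show ?thesis
    using S by (simp add: measure_pmf_of_set pos_le_divide_eq card_gt_0_iff)
qed

lemma expectation_pmf_of_set_le_of_exceptions:
  fixes f :: "'a \<Rightarrow> real"
  assumes S: "finite S" "S \<noteq> {}"
    and f: "\<And>x. x \<in> S \<Longrightarrow> f x \<le> c + a * of_bool (P x) + b * of_bool (Q x)"
    and P: "real (card (S \<inter> {x. P x})) \<le> p * real (card S)"
    and Q: "real (card (S \<inter> {x. Q x})) \<le> r * real (card S)"
    and a: "0 \<le> a" and b: "0 \<le> b"
  shows "measure_pmf.expectation (pmf_of_set S) f \<le> c + a * p + b * r"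
proof -
  have "sum f S \<le> (\<Sum>x\<in>S. c + a * of_bool (P x) + b * of_bool (Q x))"
    using f by (rule sum_mono)
  also have "\<dots> = c * real (card S) + a * real (card (S \<inter> {x. P x})) + b * real (card (S \<inter> {x. Q x}))"
    using S(1) by (simp add: sum.distrib flip: sum_distrib_left)
  also have "\<dots> \<le> c * real (card S) + a * (p * real (card S)) + b * (r * real (card S))"
    using P Q a b by (intro add_mono order_refl mult_left_mono) auto
  finally show ?thesis
    using S by (simp add: integral_pmf_of_set divide_le_eq card_gt_0_iff algebra_simps)
qed

section \<open>Stable ranks and sample order statistics\<close>

definition precedes :: "'a::linorder list \<Rightarrow> nat \<Rightarrow> nat \<Rightarrow> bool" where
  "precedes X i j \<longleftrightarrow> X ! i < X ! j \<or> (X ! i = X ! j \<and> i < j)"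

definition stable_rank :: "'a::linorder list \<Rightarrow> nat \<Rightarrow> nat" where
  "stable_rank X j = card {i. i < length X \<and> precedes X i j}"

definition lowest :: "'a::linorder list \<Rightarrow> nat \<Rightarrow> nat set" where
  "lowest X t = {j. j < length X \<and> stable_rank X j < t}"

lemma stable_rank_less:
  assumes "j < length X" "precedes X j j'"
  shows "stable_rank X j < stable_rank X j'"
  unfolding stable_rank_def
proof (rule psubset_card_mono)
  show "{i. i < length X \<and> precedes X i j} \<subset> {i. i < length X \<and> precedes X i j'}"
    using assms unfolding precedes_def by auto
qed simp

lemma stable_rank_less_length:
  assumes "j < length X"
  shows "stable_rank X j < length X"
proof -
  have "stable_rank X j \<le> card ({..<length X} - {j})"
    unfolding stable_rank_def precedes_def by (rule card_mono) auto
  then show ?thesis using assms by simp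
qed

lemma inj_on_stable_rank: "inj_on (stable_rank X) {..<length X}"
proof (rule inj_onI)
  fix i j assume "i \<in> {..<length X}" "j \<in> {..<length X}" "stable_rank X i = stable_rank X j"
  moreover have "i \<noteq> j \<Longrightarrow> precedes X i j \<or> precedes X j i"
    unfolding precedes_def by (metis linorder_neqE_nat linorder_neqE)
  ultimately show "i = j" using stable_rank_less[of i X j] stable_rank_less[of j X i] by force
qed

lemma stable_rank_image: "stable_rank X ` {..<length X} = {..<length X}"
  using inj_on_stable_rank[of X] stable_rank_less_length[of _ X]
  by (intro card_subset_eq) (auto simp: card_image)

lemma lowest_subset: "lowest X t \<subseteq> {..<length X}"
  unfolding lowest_def by auto

lemma finite_lowest: "finite (lowest X t)"
  using lowest_subset finite_subset by blast

lemma lowest_mono: "t \<le> t' \<Longrightarrow> lowest X t \<subseteq> lowest X t'"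
  unfolding lowest_def by auto

lemma lowest_0: "lowest X 0 = {}"
  unfolding lowest_def by auto

lemma lowest_length: "lowest X (length X) = {..<length X}"
  using stable_rank_less_length unfolding lowest_def by auto

lemma card_lowest:
  assumes "t \<le> length X"
  shows "card (lowest X t) = t"
proof -
  have "stable_rank X ` lowest X t = {..<t}"
    using assms stable_rank_image[of X] unfolding lowest_def by (auto simp: image_iff)
  moreover have "inj_on (stable_rank X) (lowest X t)"
    using inj_on_stable_rank by (rule inj_on_subset) (rule lowest_subset)
  ultimately show ?thesis by (metis card_image card_lessThan)
qed

lemma lowest_downward_closed:
  assumes "j \<in> lowest X t" "j' < length X" "X ! j' < X ! j"
  shows "j' \<in> lowest X t"
  using assms stable_rank_less[of j' X j] unfolding lowest_def precedes_def by auto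

lemma length_sorted_sample: "finite I \<Longrightarrow> length (sorted_sample X I) = card I"
  unfolding sorted_sample_def by simp

lemma length_filter_sorted_sample:
  assumes "finite I"
  shows "length (filter P (sorted_sample X I)) = card {j \<in> I. P (X ! j)}"
proof -
  have "length (filter P (sorted_sample X I)) = length (filter P (map (\<lambda>j. X ! j) (sorted_list_of_set I)))"
    unfolding sorted_sample_def by (metis mset_filter mset_sort size_mset)
  also have "\<dots> = length (filter (\<lambda>j. P (X ! j)) (sorted_list_of_set I))"
    by (simp add: filter_map comp_def)
  also have "\<dots> = card ({j. P (X ! j)} \<inter> I)"
    using assms by (simp add: distinct_length_filter)
  finally show ?thesis by (simp add: Collect_conj_eq Int_commute)
qed

lemma length_filter_less_nth_le:
  assumes "sorted ys" "m < length ys"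
  shows "length (filter (\<lambda>x. x < ys ! m) ys) \<le> m"
proof -
  have "{i. i < length ys \<and> ys ! i < ys ! m} \<subseteq> {..<m}"
  proof
    fix i assume i: "i \<in> {i. i < length ys \<and> ys ! i < ys ! m}"
    then have "\<not> m \<le> i" using sorted_nth_mono[OF assms(1), of m i] by auto
    then show "i \<in> {..<m}" by simp
  qed
  then have "card {i. i < length ys \<and> ys ! i < ys ! m} \<le> m"
    by (metis card_lessThan card_mono finite_lessThan)
  then show ?thesis by (simp add: length_filter_conv_card)
qed

lemma length_filter_le_nth_ge:
  assumes "sorted ys" "m < length ys"
  shows "Suc m \<le> length (filter (\<lambda>x. x \<le> ys ! m) ys)"
proof -
  have "{..<Suc m} \<subseteq> {i. i < length ys \<and> ys ! i \<le> ys ! m}"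
    using assms by (auto intro: sorted_nth_mono)
  then have "Suc m \<le> card {i. i < length ys \<and> ys ! i \<le> ys ! m}"
    by (metis card_lessThan card_mono finite_Collect_conjI finite_lessThan lessThan_def)
  then show ?thesis by (simp add: length_filter_conv_card)
qed

lemma sorted_sorted_sample: "sorted (sorted_sample X I)"
  unfolding sorted_sample_def by simp

lemma card_sample_less_order_stat:
  assumes "finite I" "1 \<le> i" "i \<le> card I"
  shows "card {j \<in> I. X ! j < sorted_sample X I ! (i - 1)} < i"
proof -
  have "length (filter (\<lambda>x. x < sorted_sample X I ! (i - 1)) (sorted_sample X I)) \<le> i - 1"
    using assms by (intro length_filter_less_nth_le sorted_sorted_sample) (simp add: length_sorted_sample)
  then show ?thesis using assms by (simp add: length_filter_sorted_sample)
qed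

lemma card_sample_le_order_stat:
  assumes "finite I" "1 \<le> i" "i \<le> card I"
  shows "i \<le> card {j \<in> I. X ! j \<le> sorted_sample X I ! (i - 1)}"
proof -
  have "Suc (i - 1) \<le> length (filter (\<lambda>x. x \<le> sorted_sample X I ! (i - 1)) (sorted_sample X I))"
    using assms by (intro length_filter_le_nth_ge sorted_sorted_sample) (simp add: length_sorted_sample)
  then show ?thesis using assms by (simp add: length_filter_sorted_sample)
qed

lemma below_value_subset_lowest:
  assumes I: "I \<subseteq> {..<length X}" "finite I"
    and hits: "i \<le> card (I \<inter> lowest X t)" and below: "card {j \<in> I. X ! j < w} < i"
  shows "\<exists>j0 \<in> I \<inter> lowest X t. w \<le> X ! j0"
    and "{j. j < length X \<and> X ! j < w} \<subseteq> lowest X t"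
proof -
  show "\<exists>j0 \<in> I \<inter> lowest X t. w \<le> X ! j0"
  proof (rule ccontr)
    assume "\<not> ?thesis"
    then have "I \<inter> lowest X t \<subseteq> {j \<in> I. X ! j < w}" by (auto simp: not_le)
    then have "card (I \<inter> lowest X t) \<le> card {j \<in> I. X ! j < w}" using I by (intro card_mono) auto
    then show False using hits below by simp
  qed
  then obtain j0 where j0: "j0 \<in> lowest X t" "w \<le> X ! j0" by blast
  show "{j. j < length X \<and> X ! j < w} \<subseteq> lowest X t"
  proof
    fix j assume "j \<in> {j. j < length X \<and> X ! j < w}"
    then show "j \<in> lowest X t"
      using lowest_downward_closed[OF j0(1)] j0(2) by (auto intro: less_le_trans)
  qed
qed

lemma above_value_disjoint_lowest:
  assumes I: "I \<subseteq> {..<length X}" "finite I"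
    and hits: "card (I \<inter> lowest X t) < i" and upto: "i \<le> card {j \<in> I. X ! j \<le> w}"
  shows "\<exists>j1 \<in> I - lowest X t. X ! j1 \<le> w"
    and "{j. j < length X \<and> w < X ! j} \<inter> lowest X t = {}"
proof -
  show "\<exists>j1 \<in> I - lowest X t. X ! j1 \<le> w"
  proof (rule ccontr)
    assume "\<not> ?thesis"
    then have "{j \<in> I. X ! j \<le> w} \<subseteq> I \<inter> lowest X t" by auto
    then have "card {j \<in> I. X ! j \<le> w} \<le> card (I \<inter> lowest X t)" using I by (intro card_mono) auto
    then show False using hits upto by simp
  qed
  then obtain j1 where j1: "j1 \<in> I" "j1 \<notin> lowest X t" "X ! j1 \<le> w" by blast
  have "j1 < length X" using I j1 by auto
  then show "{j. j < length X \<and> w < X ! j} \<inter> lowest X t = {}"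
    using lowest_downward_closed j1 by (blast intro: le_less_trans)
qed

lemma length_filter_less_or_le:
  "length (filter (\<lambda>x. x < b \<or> x \<le> a) xs)
     = length (filter (\<lambda>x. x \<le> a) xs) + length (filter (\<lambda>x. a < x \<and> x < b) xs)"
  for a b :: "'a::linorder"
  by (induction xs) auto

section \<open>Cost of one run for a fixed sample\<close>

locale select_analysis =
  fixes X :: "'a::linorder list" and n k s :: nat and g \<gamma> :: real
    and R :: "'a list \<Rightarrow> nat \<Rightarrow> nat"
  assumes length_X: "length X = n" and k_pos: "1 \<le> k" and k_le_n: "k \<le> n"
    and s_pos: "1 \<le> s" and s_less_n: "s < n" and g_pos: "0 < g" and \<gamma>_pos: "0 < \<gamma>"
    and R_bound: "\<And>xs i. 1 \<le> i \<Longrightarrow> i \<le> length xs \<Longrightarrow> real (R xs i) \<le> \<gamma> * real (length xs)"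
begin

abbreviation "iu \<equiv> i_u n k s g"
abbreviation "iv \<equiv> i_v n k s g"
abbreviation "u I \<equiv> pivot_u X I k g s"
abbreviation "v I \<equiv> pivot_v X I k g s"
abbreviation "hits I t \<equiv> card (I \<inter> lowest X t)"

text \<open>The deviation g of sample ranks, rescaled to ranks in the input.\<close>
definition D :: real where "D = g * real n / real s"

lemma n_pos: "0 < n"
  using s_less_n by simp

lemma D_pos: "0 < D"
  using g_pos s_pos n_pos by (simp add: D_def)

lemma scaled_rank_le_s: "real k * real s / real n \<le> real s"
  using k_le_n n_pos by (simp add: field_simps mult_right_mono)

lemma iu_le:
  assumes "real k * real s / real n - g \<le> real h" "1 \<le> h"
  shows "iu \<le> h"
proof -
  have "\<lceil>real k * real s / real n - g\<rceil> \<le> int h" using assms(1) by (simp add: ceiling_le_iff)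
  then show ?thesis unfolding i_u_def using assms(2) by simp
qed

lemma iu_ge: "real k * real s / real n - g \<le> real iu"
  unfolding i_u_def by linarith

lemma iu_bounds: "1 \<le> iu" "iu \<le> s"
  using iu_le[of s] scaled_rank_le_s g_pos s_pos by (auto simp: i_u_def)

lemma iv_le:
  assumes "real k * real s / real n + g \<le> real h"
  shows "iv \<le> h"
proof -
  have "\<lceil>real k * real s / real n + g\<rceil> \<le> int h" using assms by (simp add: ceiling_le_iff)
  then show ?thesis unfolding i_v_def by simp
qed

lemma less_iv:
  assumes "real h < real k * real s / real n + g" "h < s"
  shows "h < iv"
proof -
  have "int h < \<lceil>real k * real s / real n + g\<rceil>" using assms(1) by (simp add: less_ceiling_iff)
  then show ?thesis unfolding i_v_def using assms(2) by simp
qed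

lemma iv_bounds: "1 \<le> iv" "iv \<le> s"
proof -
  have "0 < real k * real s / real n + g" using k_pos s_pos n_pos g_pos by (simp add: add_pos_pos)
  then show "1 \<le> iv" using less_iv[of 0] s_pos by simp
qed (simp add: i_v_def)

lemma sample_subset: "I \<in> samples n s \<Longrightarrow> I \<subseteq> {..<length X}"
  using samplesD(3) length_X by blast

lemma hits_length: "I \<in> samples n s \<Longrightarrow> hits I n = s"
  using samplesD[of I n s] lowest_length[of X] length_X by (simp add: Int_absorb2)

lemma pivot_u_counts:
  assumes "I \<in> samples n s"
  shows "card {j \<in> I. X ! j < u I} < iu" "iu \<le> card {j \<in> I. X ! j \<le> u I}"
  using card_sample_less_order_stat card_sample_le_order_stat samplesD(1,2)[OF assms] iu_bounds
  unfolding pivot_u_def length_X by auto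

lemma pivot_v_counts:
  assumes "I \<in> samples n s"
  shows "card {j \<in> I. X ! j < v I} < iv" "iv \<le> card {j \<in> I. X ! j \<le> v I}"
  using card_sample_less_order_stat card_sample_le_order_stat samplesD(1,2)[OF assms] iv_bounds
  unfolding pivot_v_def length_X by auto

text \<open>Off the bad events defined below, which are hypergeometric tail events for the sample
  positions among lowest X t, the pivot u lies above the u_floor smallest entries and among the
  u_cap smallest ones, and v likewise with v_floor and v_cap.\<close>
definition v_cap :: nat where "v_cap = min n (nat \<lceil>real k + 2 * D\<rceil>)"
definition u_floor :: nat where "u_floor = nat \<lfloor>real k - 2 * D\<rfloor>"
definition u_cap :: nat where "u_cap = min n (max k (nat \<lfloor>D\<rfloor> + 1))"
definition v_floor :: nat where "v_floor = min (k - 1) (nat \<lfloor>real n - D\<rfloor>)"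

lemma v_cap_bounds: "k \<le> v_cap" "v_cap \<le> n" "real v_cap < real k + 2 * D + 1"
  "v_cap < n \<Longrightarrow> real k + 2 * D \<le> real v_cap"
  using k_le_n D_pos unfolding v_cap_def by linarith+

lemma u_floor_bounds: "u_floor \<le> k" "real k - 2 * D - 1 < real u_floor"
  "0 < u_floor \<Longrightarrow> real u_floor \<le> real k - 2 * D"
  using D_pos unfolding u_floor_def by linarith+

lemma u_cap_bounds: "k \<le> u_cap" "u_cap \<le> n"
  "u_cap < n \<Longrightarrow> D < real u_cap" "u_cap \<noteq> k \<Longrightarrow> real u_cap \<le> D + 1"
  using k_le_n D_pos unfolding u_cap_def by linarith+

lemma v_floor_bounds: "v_floor \<le> k - 1" "v_floor \<le> n"
  "v_floor \<noteq> k - 1 \<Longrightarrow> real n - D - 1 < real v_floor"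
  "0 < v_floor \<Longrightarrow> real v_floor \<le> real n - D"
  using k_le_n D_pos unfolding v_floor_def by linarith+

definition v_too_high :: "nat set \<Rightarrow> bool" where
  "v_too_high I \<longleftrightarrow> real (hits I v_cap) \<le> real v_cap * real s / real n - g"
definition u_too_low :: "nat set \<Rightarrow> bool" where
  "u_too_low I \<longleftrightarrow> real u_floor * real s / real n + g \<le> real (hits I u_floor)"
definition u_too_high :: "nat set \<Rightarrow> bool" where
  "u_too_high I \<longleftrightarrow> real (hits I u_cap) \<le> real u_cap * real s / real n - g"
definition v_too_low :: "nat set \<Rightarrow> bool" where
  "v_too_low I \<longleftrightarrow> real v_floor * real s / real n + g \<le> real (hits I v_floor)"

lemma scale_le: "a \<le> b \<Longrightarrow> a * real s / real n \<le> b * real s / real n"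
  by (intro divide_right_mono mult_right_mono) auto

lemma scale_less: "a < b \<Longrightarrow> a * real s / real n < b * real s / real n"
  using s_pos n_pos by (intro divide_strict_right_mono mult_strict_right_mono) auto

lemma scale_D: "(a + D) * real s / real n = a * real s / real n + g"
  using s_pos n_pos by (simp add: D_def field_simps)

lemma iv_le_hits_v_cap:
  assumes I: "I \<in> samples n s" and good: "\<not> v_too_high I"
  shows "iv \<le> hits I v_cap"
proof (cases "v_cap < n")
  case True
  have "real k * real s / real n + 2 * g = (real k + 2 * D) * real s / real n"
    using scale_D[of "real k + D"] scale_D[of "real k"] by (simp add: add.assoc)
  also have "\<dots> \<le> real v_cap * real s / real n"
    using v_cap_bounds(4)[OF True] by (rule scale_le)
  finally show ?thesis using good by (intro iv_le) (simp add: v_too_high_def)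
next
  case False
  then show ?thesis using v_cap_bounds(2) hits_length[OF I] iv_bounds by simp
qed

lemma hits_u_floor_less_iu:
  assumes I: "I \<in> samples n s" and good: "\<not> u_too_low I"
  shows "hits I u_floor < iu"
proof (cases "u_floor = 0")
  case True
  then show ?thesis using iu_bounds by (simp add: lowest_0)
next
  case False
  have "real u_floor * real s / real n + 2 * g \<le> (real k - 2 * D + 2 * D) * real s / real n"
    using scale_D[of "real u_floor + D"] scale_D[of "real u_floor"] u_floor_bounds(3) False
      scale_le[of "real u_floor + 2 * D" "real k"] by (simp add: add.assoc)
  then have "real (hits I u_floor) < real iu"
    using good iu_ge by (simp add: u_too_low_def)
  then show ?thesis by simp
qed

lemma iu_le_hits_u_cap:
  assumes I: "I \<in> samples n s" and good: "\<not> u_too_high I"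
  shows "iu \<le> hits I u_cap"
proof (cases "u_cap < n")
  case True
  have "real k * real s / real n \<le> real u_cap * real s / real n"
    using u_cap_bounds(1) by (intro scale_le) simp
  moreover have "g < real u_cap * real s / real n"
    using scale_less[OF u_cap_bounds(3)[OF True]] scale_D[of 0] by simp
  ultimately show ?thesis using good by (intro iu_le) (auto simp: u_too_high_def)
next
  case False
  then show ?thesis using u_cap_bounds(2) hits_length[OF I] iu_bounds by simp
qed

lemma hits_v_floor_less_iv:
  assumes I: "I \<in> samples n s" and good: "\<not> v_too_low I"
  shows "hits I v_floor < iv"
proof (cases "v_floor = 0")
  case True
  then show ?thesis using iv_bounds by (simp add: lowest_0)
next
  case False
  have "real v_floor * real s / real n < real k * real s / real n"
    using v_floor_bounds(1) k_pos by (intro scale_less) linarith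
  moreover have "real v_floor * real s / real n + g \<le> real s"
    using scale_le[OF v_floor_bounds(4)] scale_D[of "real n - D"] False n_pos by simp
  ultimately show ?thesis using good by (intro less_iv) (auto simp: v_too_low_def)
qed

lemma step2_cost_le:
  assumes I: "I \<in> samples n s"
  shows "real (step2_cost R X I k g s) \<le> 2 * \<gamma> * real s"
proof -
  have len: "length (sample_list X I) = s"
    unfolding sample_list_def using samplesD[OF I] by simp
  have "real (R (sample_list X I) iu) \<le> \<gamma> * real s" "real (R (sample_list X I) iv) \<le> \<gamma> * real s"
    using R_bound[of _ "sample_list X I"] len iu_bounds iv_bounds by auto
  then show ?thesis unfolding step2_cost_def length_X by simp
qed

definition count_below_v :: "nat set \<Rightarrow> nat" where
  "count_below_v I = card {j. j < n \<and> j \<notin> I \<and> X ! j < v I}"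

definition count_above_u :: "nat set \<Rightarrow> nat" where
  "count_above_u I = card {j. j < n \<and> j \<notin> I \<and> u I < X ! j}"

lemma step3_cost_eq:
  "step3_cost X I k g s = (n - s) + (if u I < v I then
     (if 2 * k < n then count_below_v I else count_above_u I) else 0)"
  unfolding step3_cost_def count_below_v_def count_above_u_def length_X Let_def by simp

lemma count_below_v_le: "count_below_v I \<le> n"
  unfolding count_below_v_def by (rule card_mono[of "{..<n}", simplified]) auto

lemma count_above_u_le: "count_above_u I \<le> n"
  unfolding count_above_u_def by (rule card_mono[of "{..<n}", simplified]) auto

lemma count_below_v_less:
  assumes I: "I \<in> samples n s" and good: "\<not> v_too_high I"
  shows "real (count_below_v I) < real k + 2 * D"
proof -
  have h: "iv \<le> hits I v_cap" using iv_le_hits_v_cap[OF I good] .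
  have "{j. j < length X \<and> X ! j < v I} \<subseteq> lowest X v_cap"
    using below_value_subset_lowest(2)[OF sample_subset[OF I] samplesD(1)[OF I] h pivot_v_counts(1)[OF I]] .
  then have "{j. j < n \<and> j \<notin> I \<and> X ! j < v I} \<subseteq> lowest X v_cap - I" using length_X by auto
  then have "count_below_v I \<le> card (lowest X v_cap - I)"
    unfolding count_below_v_def using finite_lowest by (intro card_mono) auto
  also have "\<dots> = card (lowest X v_cap) - card (lowest X v_cap \<inter> I)"
    by (rule card_Diff_subset_Int) (simp add: finite_lowest)
  also have "\<dots> = v_cap - hits I v_cap"
    using card_lowest[of v_cap X] v_cap_bounds(2) length_X by (simp add: Int_commute)
  finally have "count_below_v I + 1 \<le> v_cap" using h iv_bounds(1) v_cap_bounds(1) k_pos by arith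
  then show ?thesis using v_cap_bounds(3) by linarith
qed

lemma count_above_u_less:
  assumes I: "I \<in> samples n s" and good: "\<not> u_too_low I"
  shows "real (count_above_u I) < real n - real k + 2 * D"
proof -
  define E where "E = {j. j < n \<and> j \<notin> I \<and> u I < X ! j}"
  have h: "hits I u_floor < iu" using hits_u_floor_less_iu[OF I good] .
  have "{j. j < length X \<and> u I < X ! j} \<inter> lowest X u_floor = {}"
    using above_value_disjoint_lowest(2)[OF sample_subset[OF I] samplesD(1)[OF I] h pivot_u_counts(2)[OF I]] .
  then have "E \<union> (I - lowest X u_floor) \<subseteq> {..<n} - lowest X u_floor"
    using length_X samplesD(3)[OF I] unfolding E_def by auto
  then have "card (E \<union> (I - lowest X u_floor)) \<le> n - u_floor"
    using card_mono[of "{..<n} - lowest X u_floor"] card_lowest[of u_floor X] lowest_subset[of X]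
      u_floor_bounds(1) k_le_n length_X by (simp add: card_Diff_subset finite_lowest)
  moreover have "card (E \<union> (I - lowest X u_floor)) = card E + card (I - lowest X u_floor)"
    using samplesD(1)[OF I] unfolding E_def by (intro card_Un_disjoint) auto
  moreover have "card (I - lowest X u_floor) = s - hits I u_floor"
    using samplesD(1,2)[OF I] by (simp add: card_Diff_subset_Int)
  ultimately have "card E + 1 \<le> n - u_floor" using h iu_bounds(2) by linarith
  then show ?thesis using u_floor_bounds(1,2) k_le_n unfolding count_above_u_def E_def[symmetric]
    by linarith
qed

definition bad_partition :: "nat set \<Rightarrow> bool" where
  "bad_partition I \<longleftrightarrow> (if 2 * k < n then v_too_high I else u_too_low I)"

lemma step3_cost_le:
  assumes I: "I \<in> samples n s"
  shows "real (step3_cost X I k g s)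
           \<le> real (n - s) + real (min k (n - k)) + 2 * D + real n * of_bool (bad_partition I)"
proof -
  have "real (if 2 * k < n then count_below_v I else count_above_u I)
          \<le> real (min k (n - k)) + 2 * D + real n * of_bool (bad_partition I)"
    using count_below_v_less[OF I] count_above_u_less[OF I] count_below_v_le[of I]
      count_above_u_le[of I] k_le_n D_pos
    by (auto simp: bad_partition_def of_nat_diff)
  then show ?thesis unfolding step3_cost_eq by auto
qed

abbreviation "nL I \<equiv> length (filter (\<lambda>x. x < u I) X)"
abbreviation "nLU I \<equiv> length (filter (\<lambda>x. x \<le> u I) X)"
abbreviation "nLUM I \<equiv> length (filter (\<lambda>x. x < v I \<or> x \<le> u I) X)"
abbreviation "nR I \<equiv> length (filter (\<lambda>x. v I < x) X)"
abbreviation "nM I \<equiv> length (filter (\<lambda>x. u I < x \<and> x < v I) X)"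

definition n_hat :: "nat set \<Rightarrow> nat" where
  "n_hat I = (if (nL I < k \<and> k \<le> nLU I) \<or> (nLUM I < k \<and> k \<le> n - nR I) then 0
              else if k \<le> nL I then nL I else if n - nR I < k then nR I else nM I)"

lemma length_filter_X: "length (filter P X) = card {j. j < n \<and> P (X ! j)}"
  using length_filter_conv_card[of P X] length_X by simp

lemma n_hat_le_n: "n_hat I \<le> n"
  unfolding n_hat_def using length_filter_le[of _ X] length_X by (auto simp del: length_filter_le)

lemma step4_cost_le_n_hat: "real (step4_cost R X I k g s) \<le> \<gamma> * real (n_hat I)"
proof -
  have nR_le: "nR I \<le> n" using length_filter_le[of _ X] length_X by simp
  have split: "nLUM I = nLU I + nM I" by (rule length_filter_less_or_le)
  show ?thesis
    unfolding step4_cost_def n_hat_def Let_def length_X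
    using R_bound[of k "filter (\<lambda>x. x < u I) X"] R_bound[of "k - (n - nR I)" "filter (\<lambda>x. v I < x) X"]
      R_bound[of "k - nLU I" "filter (\<lambda>x. u I < x \<and> x < v I) X"] k_pos k_le_n nR_le split
    by auto
qed

lemma nL_le_D:
  assumes I: "I \<in> samples n s" and good: "\<not> u_too_high I" and L: "k \<le> nL I"
  shows "real (nL I) \<le> D"
proof -
  have h: "iu \<le> hits I u_cap" using iu_le_hits_u_cap[OF I good] .
  note below = below_value_subset_lowest[OF sample_subset[OF I] samplesD(1)[OF I] h pivot_u_counts(1)[OF I]]
  obtain j0 where j0: "j0 \<in> lowest X u_cap" "u I \<le> X ! j0" using below(1) by blast
  have "{j. j < n \<and> X ! j < u I} \<subseteq> lowest X u_cap - {j0}" using below(2) j0 length_X by auto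
  then have "nL I \<le> card (lowest X u_cap - {j0})"
    unfolding length_filter_X using finite_lowest by (intro card_mono) auto
  also have "\<dots> = u_cap - 1"
    using j0 card_lowest[of u_cap X] u_cap_bounds(2) length_X finite_lowest by simp
  finally have "nL I + 1 \<le> u_cap" using u_cap_bounds(1) k_pos by arith
  moreover have "real u_cap \<le> D + 1" using u_cap_bounds(4) L \<open>nL I + 1 \<le> u_cap\<close> by force
  ultimately show ?thesis by linarith
qed

lemma nR_less_D:
  assumes I: "I \<in> samples n s" and good: "\<not> v_too_low I" and R: "n - nR I < k"
  shows "real (nR I) < D"
proof -
  have h: "hits I v_floor < iv" using hits_v_floor_less_iv[OF I good] .
  note above = above_value_disjoint_lowest[OF sample_subset[OF I] samplesD(1)[OF I] h pivot_v_counts(2)[OF I]]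
  obtain j1 where j1: "j1 \<in> I" "j1 \<notin> lowest X v_floor" "X ! j1 \<le> v I" using above(1) by blast
  have "{j. j < n \<and> v I < X ! j} \<subseteq> ({..<n} - lowest X v_floor) - {j1}"
    using above(2) j1 length_X by auto
  then have "nR I \<le> card (({..<n} - lowest X v_floor) - {j1})"
    unfolding length_filter_X by (intro card_mono) auto
  also have "\<dots> = n - v_floor - 1"
    using j1 samplesD(3)[OF I] card_lowest[of v_floor X] v_floor_bounds(2) length_X lowest_subset[of X]
    by (auto simp: card_Diff_subset finite_lowest)
  finally have "nR I + 1 + v_floor \<le> n" using R k_le_n by arith
  moreover have "v_floor \<noteq> k - 1" using calculation R by arith
  ultimately show ?thesis using v_floor_bounds(3) by linarith
qed

lemma nM_less_4D:
  assumes I: "I \<in> samples n s" and good: "\<not> v_too_high I" "\<not> u_too_low I"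
  shows "real (nM I) < 4 * D"
proof (cases "nM I = 0")
  case True
  then show ?thesis using D_pos by simp
next
  case False
  define M where "M = {j. j < n \<and> u I < X ! j \<and> X ! j < v I}"
  have nM: "nM I = card M" unfolding M_def length_filter_X by simp
  then obtain x where "x \<in> M" using False by fastforce
  then have uv: "u I < v I" unfolding M_def by auto
  have hv: "iv \<le> hits I v_cap" using iv_le_hits_v_cap[OF I good(1)] .
  have hu: "hits I u_floor < iu" using hits_u_floor_less_iu[OF I good(2)] .
  note below = below_value_subset_lowest[OF sample_subset[OF I] samplesD(1)[OF I] hv pivot_v_counts(1)[OF I]]
  note above = above_value_disjoint_lowest[OF sample_subset[OF I] samplesD(1)[OF I] hu pivot_u_counts(2)[OF I]]
  obtain j0 where j0: "j0 \<in> I" "j0 \<in> lowest X v_cap" "v I \<le> X ! j0" using below(1) by blast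
  obtain j1 where j1: "j1 \<in> I" "j1 \<notin> lowest X u_floor" "X ! j1 \<le> u I" using above(1) by blast
  have j01: "j0 < n" "j1 < n" using j0 j1 samplesD(3)[OF I] by auto
  have lt: "X ! j1 < X ! j0" using j0 j1 uv by (meson le_less_trans less_le_trans)
  have "j1 \<in> lowest X v_cap" using lowest_downward_closed[OF j0(2)] j01 lt length_X by simp
  moreover have "j0 \<notin> lowest X u_floor" using above(2) j0 j01 uv length_X by (auto dest: less_le_trans)
  ultimately have "M \<union> {j0, j1} \<subseteq> lowest X v_cap - lowest X u_floor"
    using below(2) above(2) j0 j1 length_X unfolding M_def by auto
  then have "card (M \<union> {j0, j1}) \<le> card (lowest X v_cap - lowest X u_floor)"
    using finite_lowest by (intro card_mono) auto
  also have "\<dots> = v_cap - u_floor"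
    using card_lowest[of v_cap X] card_lowest[of u_floor X] v_cap_bounds(1,2) u_floor_bounds(1)
      lowest_mono[of u_floor v_cap X] length_X by (simp add: card_Diff_subset finite_lowest)
  also have "card (M \<union> {j0, j1}) = card M + 2"
    using j0 j1 lt unfolding M_def by (auto simp: card_insert_if)
  finally have "real (card M) + 2 \<le> real v_cap - real u_floor" by linarith
  then show ?thesis using nM v_cap_bounds(3) u_floor_bounds(2) by linarith
qed

definition bad_sample :: "nat set \<Rightarrow> bool" where
  "bad_sample I \<longleftrightarrow> v_too_high I \<or> u_too_low I \<or> u_too_high I \<or> v_too_low I"

lemma step4_cost_le:
  assumes I: "I \<in> samples n s"
  shows "real (step4_cost R X I k g s) \<le> 4 * \<gamma> * D + \<gamma> * real n * of_bool (bad_sample I)"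
proof -
  have "real (n_hat I) \<le> 4 * D + real n * of_bool (bad_sample I)"
  proof (cases "bad_sample I")
    case True
    then show ?thesis using n_hat_le_n[of I] D_pos by simp
  next
    case False
    then show ?thesis
      using nL_le_D[OF I] nR_less_D[OF I] nM_less_4D[OF I] D_pos
      unfolding bad_sample_def n_hat_def by auto
  qed
  then have "\<gamma> * real (n_hat I) \<le> \<gamma> * (4 * D + real n * of_bool (bad_sample I))"
    using \<gamma>_pos by (intro mult_left_mono) auto
  then show ?thesis using step4_cost_le_n_hat[of I] by (simp add: algebra_simps)
qed

definition cost :: "nat set \<Rightarrow> real" where
  "cost I = real (step2_cost R X I k g s + step3_cost X I k g s + step4_cost R X I k g s)"

definition typical_cost :: real where
  "typical_cost = 2 * \<gamma> * real s + real (n - s) + real (min k (n - k)) + (4 * \<gamma> + 2) * D"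

definition tail_prob :: real where
  "tail_prob = exp (- 2 * g\<^sup>2 / real s)"

lemma cost_le:
  assumes "I \<in> samples n s"
  shows "cost I \<le> typical_cost + real n * of_bool (bad_partition I) + \<gamma> * real n * of_bool (bad_sample I)"
  using step2_cost_le[OF assms] step3_cost_le[OF assms] step4_cost_le[OF assms]
  unfolding cost_def typical_cost_def by (simp add: algebra_simps)

lemma bad_partition_imp_bad_sample: "bad_partition I \<Longrightarrow> bad_sample I"
  unfolding bad_partition_def bad_sample_def by (auto split: if_splits)

lemma card_lower_tail_lowest:
  assumes "t \<le> n"
  shows "real (card (samples n s \<inter> {I. real (hits I t) \<le> real t * real s / real n - g}))
           \<le> tail_prob * real (card (samples n s))"
  using hypergeometric_lower_tail[of "lowest X t" n s g] lowest_subset[of X t] card_lowest[of t X]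
    assms length_X s_less_n s_pos g_pos by (simp add: tail_prob_def Int_def)

lemma card_upper_tail_lowest:
  assumes "t \<le> n"
  shows "real (card (samples n s \<inter> {I. real t * real s / real n + g \<le> real (hits I t)}))
           \<le> tail_prob * real (card (samples n s))"
  using hypergeometric_upper_tail[of "lowest X t" n s g] lowest_subset[of X t] card_lowest[of t X]
    assms length_X s_less_n s_pos g_pos by (simp add: tail_prob_def Int_def)

lemma card_bad_partition:
  "real (card (samples n s \<inter> {I. bad_partition I})) \<le> tail_prob * real (card (samples n s))"
  using card_lower_tail_lowest[OF v_cap_bounds(2)] card_upper_tail_lowest[of u_floor]
    u_floor_bounds(1) k_le_n
  unfolding bad_partition_def v_too_high_def u_too_low_def by (cases "2 * k < n") simp_all

lemma card_bad_sample:
  "real (card (samples n s \<inter> {I. bad_sample I})) \<le> 4 * tail_prob * real (card (samples n s))"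
proof -
  let ?S = "samples n s"
  let ?A = "?S \<inter> {I. v_too_high I}" and ?B = "?S \<inter> {I. u_too_low I}"
    and ?C = "?S \<inter> {I. u_too_high I}" and ?D = "?S \<inter> {I. v_too_low I}"
  have union: "?S \<inter> {I. bad_sample I} = ?A \<union> ?B \<union> ?C \<union> ?D"
    unfolding bad_sample_def by auto
  have "card (?S \<inter> {I. bad_sample I}) \<le> card ?A + card ?B + card ?C + card ?D"
    unfolding union using card_Un_le[of "?A \<union> ?B \<union> ?C" ?D] card_Un_le[of "?A \<union> ?B" ?C] card_Un_le[of ?A ?B]
    by linarith
  moreover have "real (card (?S \<inter> {I. v_too_high I})) \<le> tail_prob * real (card ?S)"
    "real (card (?S \<inter> {I. u_too_low I})) \<le> tail_prob * real (card ?S)"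
    "real (card (?S \<inter> {I. u_too_high I})) \<le> tail_prob * real (card ?S)"
    "real (card (?S \<inter> {I. v_too_low I})) \<le> tail_prob * real (card ?S)"
    using card_lower_tail_lowest[OF v_cap_bounds(2)] card_upper_tail_lowest[of u_floor]
      card_lower_tail_lowest[OF u_cap_bounds(2)] card_upper_tail_lowest[OF v_floor_bounds(2)]
      u_floor_bounds(1) k_le_n
    unfolding v_too_high_def u_too_low_def u_too_high_def v_too_low_def by auto
  ultimately show ?thesis by linarith
qed

lemma prob_cost_le:
  assumes "typical_cost \<le> B"
  shows "1 - 4 * tail_prob \<le> measure_pmf.prob (sample_pmf n s) {I. cost I \<le> B}"
  unfolding sample_pmf_eq_pmf_of_set
proof (rule prob_pmf_of_set_ge_of_exceptions[OF finite_samples _ _ card_bad_sample])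
  show "samples n s \<noteq> {}" using samples_nonempty s_less_n by simp
  show "cost I \<le> B" if "I \<in> samples n s" "\<not> bad_sample I" for I
  proof -
    have "\<not> bad_partition I" using that(2) bad_partition_imp_bad_sample by blast
    then show ?thesis using cost_le[OF that(1)] that(2) assms by simp
  qed
qed

lemma expectation_cost_le:
  assumes "typical_cost \<le> B" "real n * tail_prob \<le> T"
  shows "measure_pmf.expectation (sample_pmf n s) cost \<le> B + (4 * \<gamma> + 1) * T"
proof -
  have "measure_pmf.expectation (pmf_of_set (samples n s)) cost
          \<le> typical_cost + real n * tail_prob + \<gamma> * real n * (4 * tail_prob)"
    using samples_nonempty s_less_n \<gamma>_pos
    by (intro expectation_pmf_of_set_le_of_exceptions[OF finite_samples _ cost_le
          card_bad_partition card_bad_sample]) auto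
  also have "\<dots> = typical_cost + (4 * \<gamma> + 1) * (real n * tail_prob)"
    by (simp add: algebra_simps)
  also have "\<dots> \<le> B + (4 * \<gamma> + 1) * T"
    using assms \<gamma>_pos by (intro add_mono mult_left_mono) auto
  finally show ?thesis unfolding sample_pmf_eq_pmf_of_set .
qed

lemma typical_cost_le:
  assumes "1/2 \<le> \<gamma>" "real s \<le> S" "D \<le> E"
  shows "typical_cost \<le> real n + real (min k (n - k)) + (2 * \<gamma> - 1) * S + (4 * \<gamma> + 2) * E"
proof -
  have "(2 * \<gamma> - 1) * real s \<le> (2 * \<gamma> - 1) * S" "(4 * \<gamma> + 2) * D \<le> (4 * \<gamma> + 2) * E"
    using assms by (auto intro: mult_left_mono)
  then show ?thesis
    using s_less_n unfolding typical_cost_def by (simp add: of_nat_diff algebra_simps)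
qed

end

section \<open>Estimates for the parameters s and g\<close>

lemma ln_ge_1: "3 \<le> n \<Longrightarrow> 1 \<le> ln (real n)"
  using exp_le by (subst ln_ge_iff) auto

lemma fsel_pos: "3 \<le> n \<Longrightarrow> 0 < fsel n"
  unfolding fsel_def using ln_ge_1[of n] by simp

lemma fsel_cube:
  assumes "1 < n"
  shows "fsel n ^ 3 = real n ^ 2 * ln (real n)"
proof -
  have "0 < ln (real n)" using assms by simp
  have "fsel n ^ 3 = (real n powr (2/3)) ^ 3 * (ln (real n) powr (1/3)) ^ 3"
    unfolding fsel_def by (simp add: power_mult_distrib)
  also have "(real n powr (2/3)) ^ 3 = real n powr 2" using assms by (subst powr_power) auto
  also have "(ln (real n) powr (1/3)) ^ 3 = ln (real n)"
    using \<open>0 < ln (real n)\<close> by (subst powr_power) auto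
  also have "real n powr 2 = real n ^ 2" using assms by (simp add: powr_numeral)
  finally show ?thesis .
qed

lemma s_size_bounds:
  assumes "s_size \<alpha> n < n - 1" "0 < \<alpha>"
  shows "\<alpha> * fsel n \<le> real (s_size \<alpha> n)" "real (s_size \<alpha> n) \<le> \<alpha> * fsel n + 1"
proof -
  have "s_size \<alpha> n = nat \<lceil>\<alpha> * fsel n\<rceil>"
    using assms(1) unfolding s_size_def by (simp add: min_def split: if_splits)
  moreover have "0 \<le> \<alpha> * fsel n" using assms(2) by (simp add: fsel_def)
  ultimately show "\<alpha> * fsel n \<le> real (s_size \<alpha> n)" "real (s_size \<alpha> n) \<le> \<alpha> * fsel n + 1"
    by linarith+
qed

lemma rescaled_gap_le:
  assumes "0 < \<alpha>" "0 < \<beta>" "3 \<le> n" "0 < s" "\<alpha> * fsel n \<le> real s" "1 < \<theta> * real s" "\<theta> * real s \<le> real n"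
  shows "g_gap \<beta> \<theta> s * real n / real s \<le> sqrt (\<beta> / \<alpha>) * fsel n"
proof (rule power2_le_imp_le)
  define L where "L = ln (\<theta> * real s)"
  define f where "f = fsel n"
  have f: "0 < f" unfolding f_def using fsel_pos assms by simp
  have L: "0 < L" "L \<le> ln (real n)" unfolding L_def using assms by auto
  have "(g_gap \<beta> \<theta> s * real n / real s)\<^sup>2 = \<beta> * real s * L * real n ^ 2 / real s ^ 2"
    using assms L unfolding g_gap_def L_def[symmetric] by (simp add: power_divide power_mult_distrib)
  also have "\<dots> = \<beta> * L * real n ^ 2 / real s"
    using assms by (simp add: power2_eq_square field_simps)
  also have "\<dots> \<le> \<beta> * ln (real n) * real n ^ 2 / (\<alpha> * f)"
    using assms f L unfolding f_def[symmetric] by (intro frac_le mult_right_mono mult_left_mono) auto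
  also have "\<dots> = (\<beta> / \<alpha>) * f\<^sup>2"
    using fsel_cube[of n] assms f unfolding f_def[symmetric] by (simp add: field_simps power2_eq_square power3_eq_cube)
  also have "\<dots> = (sqrt (\<beta> / \<alpha>) * fsel n)\<^sup>2"
    using assms by (simp add: power_mult_distrib f_def)
  finally show "(g_gap \<beta> \<theta> s * real n / real s)\<^sup>2 \<le> (sqrt (\<beta> / \<alpha>) * fsel n)\<^sup>2" .
  show "0 \<le> sqrt (\<beta> / \<alpha>) * fsel n" using assms fsel_pos[of n] by simp
qed

lemma gap_tail_le:
  assumes "0 < \<alpha>" "0 < \<beta>" "0 < \<theta>" "3 \<le> n" "\<alpha> * fsel n \<le> real s" "1 < \<theta> * real s"
  shows "exp (- 2 * (g_gap \<beta> \<theta> s)\<^sup>2 / real s)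
           \<le> (\<alpha> * \<theta>) powr (-2 * \<beta>) * (real n powr (-4 * \<beta> / 3) * ln (real n) powr (-2 * \<beta> / 3))"
proof -
  have s: "0 < s" using assms by (auto intro: ccontr)
  have f: "0 < fsel n" using fsel_pos assms by simp
  have l: "0 < ln (real n)" using ln_ge_1 assms by force
  have "exp (- 2 * (g_gap \<beta> \<theta> s)\<^sup>2 / real s) = (\<theta> * real s) powr (-2 * \<beta>)"
    using assms s by (simp add: g_gap_def powr_def)
  also have "\<dots> \<le> (\<alpha> * \<theta> * fsel n) powr (-2 * \<beta>)"
    using assms f by (intro powr_mono2') (auto simp: mult_ac)
  also have "\<dots> = (\<alpha> * \<theta>) powr (-2 * \<beta>) * (real n powr (-4 * \<beta> / 3) * ln (real n) powr (-2 * \<beta> / 3))"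
    using assms f l by (simp add: fsel_def powr_mult powr_powr)
  finally show ?thesis .
qed

lemma n_mult_tail_le_fsel:
  assumes "1/4 \<le> \<beta>" "3 \<le> n"
  shows "real n * (real n powr (-4 * \<beta> / 3) * ln (real n) powr (-2 * \<beta> / 3)) \<le> fsel n"
proof -
  have n: "1 \<le> real n" and l: "1 \<le> ln (real n)" using assms ln_ge_1 by auto
  have "real n * real n powr (-4 * \<beta> / 3) = real n powr (1 + (-4 * \<beta> / 3))"
    using n powr_add[of "real n" 1 "-4 * \<beta> / 3"] by simp
  also have "\<dots> \<le> real n powr (2/3)" using n assms by (intro powr_mono) auto
  finally have "real n * real n powr (-4 * \<beta> / 3) \<le> real n powr (2/3)" .
  moreover have "ln (real n) powr (-2 * \<beta> / 3) \<le> ln (real n) powr (1/3)"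
    using l assms by (intro powr_mono) auto
  ultimately show ?thesis unfolding fsel_def mult.assoc[symmetric] by (intro mult_mono) auto
qed

lemma n_mult_gap_tail_le:
  assumes "0 < \<alpha>" "0 < \<theta>" "1/4 \<le> \<beta>" "3 \<le> n" "\<alpha> * fsel n \<le> real s" "1 < \<theta> * real s"
  shows "real n * exp (- 2 * (g_gap \<beta> \<theta> s)\<^sup>2 / real s) \<le> (\<alpha> * \<theta>) powr (-2 * \<beta>) * fsel n"
proof -
  have "real n * exp (- 2 * (g_gap \<beta> \<theta> s)\<^sup>2 / real s)
      \<le> (\<alpha> * \<theta>) powr (-2 * \<beta>) * (real n * (real n powr (-4 * \<beta> / 3) * ln (real n) powr (-2 * \<beta> / 3)))"
    using mult_left_mono[OF gap_tail_le, of \<alpha> \<beta> \<theta> n s "real n"] assms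
    by (simp add: mult.left_commute)
  also have "\<dots> \<le> (\<alpha> * \<theta>) powr (-2 * \<beta>) * fsel n"
    using n_mult_tail_le_fsel[OF assms(3,4)] by (rule mult_left_mono) simp
  finally show ?thesis .
qed

lemma gamma_hat_mult_fsel:
  "0 < fsel n \<Longrightarrow> gamma_hat \<gamma> \<alpha> \<beta> n * fsel n
     = (2 * \<gamma> - 1) * (\<alpha> * fsel n + 1) + (4 * \<gamma> + 2) * (sqrt (\<beta> / \<alpha>) * fsel n)"
  unfolding gamma_hat_def by (simp add: field_simps)

theorem theorem5p1:
  fixes \<alpha> \<beta> \<theta> \<gamma>P :: real and n k :: nat and X :: "'a::linorder list"
    and R_cost :: "'a list \<Rightarrow> nat \<Rightarrow> nat"
  assumes "\<alpha> > 0" "\<beta> > 0" "\<theta> > 0" "\<gamma>P > 2"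
    and "length X = n" "1 \<le> k" "k \<le> n"
    and R_bound: "\<And>xs i. 1 \<le> i \<Longrightarrow> i \<le> length xs \<Longrightarrow> real (R_cost xs i) \<le> \<gamma>P * real (length xs)"
    and "s_size \<alpha> n < n - 1"
    and "1 < \<theta> * real (s_size \<alpha> n)" "\<theta> * real (s_size \<alpha> n) \<le> real n"
  shows "measure_pmf.prob (sample_pmf n (s_size \<alpha> n))
           {I. real (c_nk R_cost \<alpha> \<beta> \<theta> X k I) \<le> real n + real (min k (n - k)) + gamma_hat \<gamma>P \<alpha> \<beta> n * fsel n}
         \<ge> 1 - 4 * (\<alpha> * \<theta>) powr (-2 * \<beta>) * real n powr (-4 * \<beta> / 3) * ln (real n) powr (-2 * \<beta> / 3)
       \<and> (\<beta> \<ge> 1/4 \<longrightarrow>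
         measure_pmf.expectation (sample_pmf n (s_size \<alpha> n)) (\<lambda>I. real (c_nk R_cost \<alpha> \<beta> \<theta> X k I))
         \<le> real n + real (min k (n - k)) + (gamma_hat \<gamma>P \<alpha> \<beta> n + (4 * \<gamma>P + 2) * (\<alpha> * \<theta>) powr (-2 * \<beta>)) * fsel n)"
proof -
  define s where "s = s_size \<alpha> n"
  define g where "g = g_gap \<beta> \<theta> s"
  define B where "B = real n + real (min k (n - k)) + gamma_hat \<gamma>P \<alpha> \<beta> n * fsel n"
  have s: "0 < s" "s < n - 1" "\<alpha> * fsel n \<le> real s" "real s \<le> \<alpha> * fsel n + 1"
    "1 < \<theta> * real s" "\<theta> * real s \<le> real n"
    using assms(9-11) s_size_bounds[OF assms(9,1)] unfolding s_def by (auto intro: ccontr)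
  then have n: "3 \<le> n" by linarith
  interpret select_analysis X n k s g \<gamma>P R_cost
    using assms(2,4-8) s by unfold_locales (auto simp: g_def g_gap_def)
  have c_nk: "real (c_nk R_cost \<alpha> \<beta> \<theta> X k I) = cost I" for I
    unfolding c_nk_def cost_def Let_def assms(5) s_def[symmetric] g_def[symmetric] ..
  have "D \<le> sqrt (\<beta> / \<alpha>) * fsel n"
    using rescaled_gap_le[OF assms(1,2) n s(1,3,5,6)] unfolding D_def unfolding g_def .
  then have typical: "typical_cost \<le> B"
    using typical_cost_le[OF _ s(4)] assms(4) fsel_pos[OF n] by (simp add: B_def gamma_hat_mult_fsel add.assoc)
  have tail: "tail_prob = exp (- 2 * (g_gap \<beta> \<theta> s)\<^sup>2 / real s)"
    unfolding tail_prob_def unfolding g_def ..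
  have "measure_pmf.expectation (sample_pmf n s) cost \<le> B + (4 * \<gamma>P + 2) * ((\<alpha> * \<theta>) powr (-2 * \<beta>) * fsel n)"
    if "1/4 \<le> \<beta>"
    using expectation_cost_le[OF typical n_mult_gap_tail_le[OF assms(1,3) that n s(3,5), folded tail]]
      mult_right_mono[of "4 * \<gamma>P + 1" "4 * \<gamma>P + 2" "(\<alpha> * \<theta>) powr (-2 * \<beta>) * fsel n"] fsel_pos[OF n]
    by simp
  then show ?thesis
    using prob_cost_le[OF typical] gap_tail_le[OF assms(1-3) n s(3,5), folded tail]
    unfolding c_nk s_def[symmetric] by (simp add: B_def algebra_simps)
qed

end
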